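(* If $T$ and $T'$ are proper caterpillars with $\Phi(T)=\Phi(T')$, then $T$ and $T'$ are isomorphic. In other words, the map $\Phi$ from (isomorphism classes of) proper caterpillars to reverse-classes of integer compositions is one-to-one.
   Context: A composition is a finite nonempty sequence $\beta=\beta_1\beta_2\cdots\beta_k$ of positive integers; its reverse is $\beta_k\cdots\beta_2\beta_1$, and its reverse-class is $[\beta]^*=\{\beta,\text{reverse of }\beta\}$. A caterpillar is a tree in which the subgraph induced by the internal (non-leaf) vertices is a non-trivial path (the spine); it is proper if every internal vertex is adjacent to at least one leaf. For a proper caterpillar $T$ with spine $v_1v_2\cdots v_k$ (consecutive vertices adjacent), let $L(T)$ be the set of edges not on the spine and let $\beta_i$ be the number of vertices of the connected component of $(V(T),L(T))$ containing $v_i$ (i.e. $1$ plus the number of leaves adjacent to $v_i$). Define $\Phi(T)=[\beta_1\beta_2\cdots\beta_k]^*$. *)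

theory Defs
  imports Main
begin

definition simple_graph :: "'a set \<Rightarrow> 'a set set \<Rightarrow> bool" where
  "simple_graph V E \<longleftrightarrow> finite V \<and>
     (\<forall>e\<in>E. \<exists>u v. e = {u, v} \<and> u \<noteq> v \<and> u \<in> V \<and> v \<in> V)"

definition adj_rel :: "'a set set \<Rightarrow> ('a \<times> 'a) set" where
  "adj_rel E = {(u, v). {u, v} \<in> E}"

definition connected_graph :: "'a set \<Rightarrow> 'a set set \<Rightarrow> bool" where
  "connected_graph V E \<longleftrightarrow> V \<noteq> {} \<and> (\<forall>u\<in>V. \<forall>v\<in>V. (u, v) \<in> (adj_rel E)\<^sup>*)"

definition is_cycle :: "'a set \<Rightarrow> 'a set set \<Rightarrow> 'a list \<Rightarrow> bool" where
  "is_cycle V E cs \<longleftrightarrow> distinct cs \<and> length cs \<ge> 3 \<and> set cs \<subseteq> V \<and>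
     (\<forall>i. Suc i < length cs \<longrightarrow> {cs ! i, cs ! Suc i} \<in> E) \<and> {last cs, hd cs} \<in> E"

definition is_tree :: "'a set \<Rightarrow> 'a set set \<Rightarrow> bool" where
  "is_tree V E \<longleftrightarrow> simple_graph V E \<and> connected_graph V E \<and> \<not> (\<exists>cs. is_cycle V E cs)"

definition degree :: "'a set set \<Rightarrow> 'a \<Rightarrow> nat" where
  "degree E v = card {e\<in>E. v \<in> e}"

definition leaves :: "'a set \<Rightarrow> 'a set set \<Rightarrow> 'a set" where
  "leaves V E = {v\<in>V. degree E v = 1}"

definition internal :: "'a set \<Rightarrow> 'a set set \<Rightarrow> 'a set" where
  "internal V E = V - leaves V E"

definition induced_edges :: "'a set set \<Rightarrow> 'a set \<Rightarrow> 'a set set" where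
  "induced_edges E I = {e\<in>E. e \<subseteq> I}"

definition path_listing :: "'a set \<Rightarrow> 'a set set \<Rightarrow> 'a list \<Rightarrow> bool" where
  "path_listing I F vs \<longleftrightarrow> distinct vs \<and> set vs = I \<and> length vs \<ge> 2 \<and>
     F = {{vs ! i, vs ! Suc i} | i. Suc i < length vs}"

definition spine_listing :: "'a set \<Rightarrow> 'a set set \<Rightarrow> 'a list \<Rightarrow> bool" where
  "spine_listing V E vs \<longleftrightarrow>
     path_listing (internal V E) (induced_edges E (internal V E)) vs"

definition caterpillar :: "'a set \<Rightarrow> 'a set set \<Rightarrow> bool" where
  "caterpillar V E \<longleftrightarrow> is_tree V E \<and> (\<exists>vs. spine_listing V E vs)"

definition proper_caterpillar :: "'a set \<Rightarrow> 'a set set \<Rightarrow> bool" where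
  "proper_caterpillar V E \<longleftrightarrow> caterpillar V E \<and>
     (\<forall>v\<in>internal V E. \<exists>w\<in>leaves V E. {v, w} \<in> E)"

definition non_spine_edges :: "'a set \<Rightarrow> 'a set set \<Rightarrow> 'a set set" where
  "non_spine_edges V E = E - induced_edges E (internal V E)"

definition component :: "'a set \<Rightarrow> 'a set set \<Rightarrow> 'a \<Rightarrow> 'a set" where
  "component V F v = {u\<in>V. (v, u) \<in> (adj_rel F)\<^sup>*}"

definition composition_of :: "'a set \<Rightarrow> 'a set set \<Rightarrow> 'a list \<Rightarrow> nat list" where
  "composition_of V E vs = map (\<lambda>v. card (component V (non_spine_edges V E) v)) vs"

text \<open>Phi(T) = reverse-class of beta_1 ... beta_k for a chosen spine ordering.\<close>
definition Phi :: "'a set \<Rightarrow> 'a set set \<Rightarrow> nat list set" where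
  "Phi V E = (let vs = (SOME vs. spine_listing V E vs)
              in {composition_of V E vs, rev (composition_of V E vs)})"

definition graph_iso :: "'a set \<Rightarrow> 'a set set \<Rightarrow> 'b set \<Rightarrow> 'b set set \<Rightarrow> bool" where
  "graph_iso V E V' E' \<longleftrightarrow> (\<exists>f. bij_betw f V V' \<and>
     (\<forall>u\<in>V. \<forall>v\<in>V. {u, v} \<in> E \<longleftrightarrow> {f u, f v} \<in> E'))"

end

theory Submission
  imports Defs "HOL-Library.Disjoint_Sets"
begin

text \<open>The vertices of a proper caterpillar split into blocks, one for each spine vertex \<open>v\<^sub>i\<close>:
  \<open>v\<^sub>i\<close> together with its pendant leaves. This block is exactly the component of \<open>v\<^sub>i\<close> in
  \<open>(V, L(T))\<close>, so \<open>\<beta>\<^sub>i\<close> is its size. Adjacency is determined by block indices alone: spine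
  vertices are adjacent iff their indices are consecutive, a leaf is adjacent only to the spine vertex
  of its own block, and two leaves are never adjacent. So if the compositions agree (after reversing
  one spine if necessary), gluing bijections between corresponding blocks that fix the spine
  vertices yields an isomorphism.\<close>

lemma bij_betw_fun_upd_insert:
  assumes "bij_betw h A B" "a \<notin> A" "b \<notin> B"
  shows "bij_betw (h(a := b)) (insert a A) (insert b B)"
proof -
  have "bij_betw (h(a := b)) A B"
    using assms(1,2) by (subst bij_betw_cong[where g = h]) auto
  then show ?thesis
    using notIn_Un_bij_betw[of a A "h(a := b)" B] assms(2,3) by simp
qed

lemma finite_same_card_pointed_bij:
  assumes "finite A" "finite B" "a \<notin> A" "b \<notin> B" "card (insert a A) = card (insert b B)"
  obtains g where "bij_betw g (insert a A) (insert b B)" "g a = b"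
proof -
  have "card A = card B" using assms by simp
  then obtain h where "bij_betw h A B" using finite_same_card_bij assms(1,2) by blast
  from bij_betw_fun_upd_insert[OF this assms(3,4)] show ?thesis
    by (rule that) simp
qed

lemma bij_betw_UN_disjoint_family:
  assumes bij: "\<And>i. i \<in> I \<Longrightarrow> bij_betw (g i) (A i) (B i)"
    and disjA: "disjoint_family_on A I" and disjB: "disjoint_family_on B I"
  obtains f where "bij_betw f (\<Union>i\<in>I. A i) (\<Union>i\<in>I. B i)"
    and "\<And>i x. i \<in> I \<Longrightarrow> x \<in> A i \<Longrightarrow> f x = g i x"
proof
  define f where "f x = g (SOME i. i \<in> I \<and> x \<in> A i) x" for x
  show f_eq: "f x = g i x" if "i \<in> I" "x \<in> A i" for i x
  proof -
    have "(SOME i. i \<in> I \<and> x \<in> A i) = i"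
      using that disjA by (intro some_equality) (auto simp: disjoint_family_on_def)
    then show ?thesis by (simp add: f_def)
  qed
  have maps: "f x \<in> B i" if "i \<in> I" "x \<in> A i" for i x
    using bij[OF that(1)] that f_eq[OF that] unfolding bij_betw_def by blast
  show "bij_betw f (\<Union>i\<in>I. A i) (\<Union>i\<in>I. B i)"
    unfolding bij_betw_def
  proof
    show "inj_on f (\<Union>i\<in>I. A i)"
    proof (rule inj_onI, elim UN_E)
      fix x y i j assume x: "i \<in> I" "x \<in> A i" and y: "j \<in> I" "y \<in> A j" and "f x = f y"
      have "i = j"
        using maps[OF x] maps[OF y] \<open>f x = f y\<close> disjB x(1) y(1)
        unfolding disjoint_family_on_def by (metis disjoint_iff)
      then have "g i x = g i y" "y \<in> A i"
        using \<open>f x = f y\<close> f_eq[OF x] f_eq[OF y] y by simp_all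
      then show "x = y"
        using bij[OF x(1)] x(2) by (auto simp: bij_betw_def dest: inj_onD)
    qed
    show "f ` (\<Union>i\<in>I. A i) = (\<Union>i\<in>I. B i)"
    proof (intro equalityI subsetI)
      fix y assume "y \<in> (\<Union>i\<in>I. B i)"
      then obtain i x where "i \<in> I" "x \<in> A i" "y = g i x"
        using bij unfolding bij_betw_def by blast
      then show "y \<in> f ` (\<Union>i\<in>I. A i)" using f_eq by (metis UN_I image_eqI)
    qed (use maps in blast)
  qed
qed

definition pendant_leaves :: "'a set \<Rightarrow> 'a set set \<Rightarrow> 'a \<Rightarrow> 'a set" where
  "pendant_leaves V E v = {w \<in> leaves V E. {v, w} \<in> E}"

definition spine_block :: "'a set \<Rightarrow> 'a set set \<Rightarrow> 'a \<Rightarrow> 'a set" where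
  "spine_block V E v = insert v (pendant_leaves V E v)"

lemma simple_graph_edgeD:
  assumes "simple_graph V E" "{a, b} \<in> E"
  shows "a \<in> V" "b \<in> V" "a \<noteq> b"
  using assms by (auto simp: simple_graph_def doubleton_eq_iff)

lemma proper_caterpillar_is_tree: "proper_caterpillar V E \<Longrightarrow> is_tree V E"
  by (simp add: proper_caterpillar_def caterpillar_def)

lemma proper_caterpillar_simple_graph: "proper_caterpillar V E \<Longrightarrow> simple_graph V E"
  using proper_caterpillar_is_tree is_tree_def by blast

lemma proper_caterpillar_spineE:
  assumes "proper_caterpillar V E"
  obtains vs where "spine_listing V E vs"
  using assms unfolding proper_caterpillar_def caterpillar_def by blast

lemma spine_listingD:
  assumes "spine_listing V E vs"
  shows "distinct vs" "set vs = internal V E" "length vs \<ge> 2"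
  using assms unfolding spine_listing_def path_listing_def by auto

lemma leaf_edgeE:
  assumes "y \<in> leaves V E"
  obtains e where "{e \<in> E. y \<in> e} = {e}"
proof -
  have "card {e \<in> E. y \<in> e} = 1" using assms by (simp add: leaves_def degree_def)
  then show ?thesis by (rule card_1_singletonE) (rule that)
qed

lemma leaf_neighbour_unique:
  assumes "y \<in> leaves V E" "{y, a} \<in> E" "{y, b} \<in> E"
  shows "a = b"
proof -
  obtain e where e: "{e \<in> E. y \<in> e} = {e}" using assms(1) by (rule leaf_edgeE)
  have "{y, a} \<in> {e}" "{y, b} \<in> {e}" unfolding e[symmetric] using assms(2,3) by auto
  then have "{y, a} = {y, b}" by simp
  then show ?thesis by (auto simp: doubleton_eq_iff)
qed

lemma leaf_neighbourE:
  assumes "simple_graph V E" "y \<in> leaves V E"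
  obtains u where "{y, u} \<in> E"
proof -
  obtain e where "{e \<in> E. y \<in> e} = {e}" using assms(2) by (rule leaf_edgeE)
  then have "e \<in> E" "y \<in> e" by auto
  moreover from this obtain a b where "e = {a, b}"
    using assms(1) unfolding simple_graph_def by blast
  ultimately have "{y, if y = a then b else a} \<in> E" by (auto simp: insert_commute)
  then show ?thesis by (rule that)
qed

lemma adjacent_leaves_cover:
  assumes "connected_graph V E" "w \<in> leaves V E" "u \<in> leaves V E" "{w, u} \<in> E"
  shows "V \<subseteq> {w, u}"
proof
  fix x assume "x \<in> V"
  with assms(1,2) have "(w, x) \<in> (adj_rel E)\<^sup>*"
    by (simp add: connected_graph_def leaves_def)
  then show "x \<in> {w, u}"
  proof (induction rule: rtrancl_induct)
    case (step y z)
    then have yz: "{y, z} \<in> E" by (simp add: adj_rel_def)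
    from step.IH show ?case
    proof
      assume "y = w"
      then show ?thesis using leaf_neighbour_unique[OF assms(2,4)] yz by simp
    next
      assume "y \<in> {u}"
      moreover have "{u, w} \<in> E" using assms(4) by (simp add: insert_commute)
      ultimately show ?thesis using leaf_neighbour_unique[OF assms(3)] yz by auto
    qed
  qed simp
qed

lemma leaf_neighbour_internal:
  assumes pc: "proper_caterpillar V E" and w: "w \<in> leaves V E" and wu: "{w, u} \<in> E"
  shows "u \<in> internal V E"
proof (rule ccontr)
  assume "u \<notin> internal V E"
  moreover have "u \<in> V"
    using simple_graph_edgeD[OF proper_caterpillar_simple_graph[OF pc] wu] by simp
  ultimately have u: "u \<in> leaves V E" by (simp add: internal_def)
  have "connected_graph V E"
    using proper_caterpillar_is_tree[OF pc] by (simp add: is_tree_def)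
  then have "V \<subseteq> {w, u}" using w u wu by (rule adjacent_leaves_cover)
  with w u have "internal V E = {}" by (auto simp: internal_def)
  moreover obtain vs where "spine_listing V E vs" using pc by (rule proper_caterpillar_spineE)
  ultimately show False using spine_listingD[of V E vs] by auto
qed

lemma pendant_leaf_edge_iff:
  assumes "w \<in> pendant_leaves V E v"
  shows "{w, x} \<in> E \<longleftrightarrow> x = v"
proof -
  have "w \<in> leaves V E" "{w, v} \<in> E"
    using assms by (auto simp: pendant_leaves_def insert_commute)
  then show ?thesis using leaf_neighbour_unique by metis
qed

lemma internal_notin_pendant_leaves: "v \<in> internal V E \<Longrightarrow> v \<notin> pendant_leaves V E u"
  by (simp add: internal_def pendant_leaves_def)

lemma spine_block_subset: "v \<in> V \<Longrightarrow> spine_block V E v \<subseteq> V"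
  by (auto simp: spine_block_def pendant_leaves_def leaves_def)

lemma spine_blocks_disjoint:
  assumes "v \<in> internal V E" "v' \<in> internal V E"
    and "x \<in> spine_block V E v" "x \<in> spine_block V E v'"
  shows "v = v'"
proof (cases "x \<in> pendant_leaves V E v")
  case True
  with assms(4) have "x \<in> pendant_leaves V E v'"
    using internal_notin_pendant_leaves[OF assms(2), of v] by (auto simp: spine_block_def)
  with True show ?thesis
    using pendant_leaf_edge_iff by (metis insert_commute pendant_leaves_def mem_Collect_eq)
next
  case False
  with assms(3) have "x = v" by (simp add: spine_block_def)
  with assms(4) show ?thesis
    using internal_notin_pendant_leaves[OF assms(1), of v'] by (auto simp: spine_block_def)
qed

lemma spine_blocks_cover:
  assumes pc: "proper_caterpillar V E"
  shows "V = (\<Union>v\<in>internal V E. spine_block V E v)"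
proof (intro equalityI subsetI)
  fix x assume x: "x \<in> V"
  show "x \<in> (\<Union>v\<in>internal V E. spine_block V E v)"
  proof (cases "x \<in> internal V E")
    case True
    then show ?thesis by (auto simp: spine_block_def)
  next
    case False
    with x have leaf: "x \<in> leaves V E" by (simp add: internal_def)
    obtain u where xu: "{x, u} \<in> E"
      using proper_caterpillar_simple_graph[OF pc] leaf by (rule leaf_neighbourE)
    then have "u \<in> internal V E" using leaf_neighbour_internal[OF pc leaf] by simp
    moreover have "x \<in> spine_block V E u"
      using leaf xu by (simp add: spine_block_def pendant_leaves_def insert_commute)
    ultimately show ?thesis by blast
  qed
next
  fix x assume "x \<in> (\<Union>v\<in>internal V E. spine_block V E v)"
  then obtain v where "v \<in> internal V E" "x \<in> spine_block V E v" by blast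
  then show "x \<in> V" using spine_block_subset[of v V E] by (auto simp: internal_def)
qed

lemma component_non_spine_edges:
  assumes G: "simple_graph V E" and v: "v \<in> internal V E"
  shows "component V (non_spine_edges V E) v = spine_block V E v"
proof (intro equalityI subsetI)
  fix x assume "x \<in> component V (non_spine_edges V E) v"
  then have "(v, x) \<in> (adj_rel (non_spine_edges V E))\<^sup>*" by (simp add: component_def)
  then show "x \<in> spine_block V E v"
  proof (induction rule: rtrancl_induct)
    case (step y z)
    then have yz: "{y, z} \<in> E" "\<not> {y, z} \<subseteq> internal V E"
      by (auto simp: adj_rel_def non_spine_edges_def induced_edges_def)
    show ?case
    proof (cases "y = v")
      case True
      moreover have "z \<in> V" using simple_graph_edgeD[OF G yz(1)] by simp
      ultimately show ?thesis
        using yz v by (auto simp: spine_block_def pendant_leaves_def internal_def)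
    next
      case False
      with step.IH have "y \<in> pendant_leaves V E v" by (simp add: spine_block_def)
      then show ?thesis using pendant_leaf_edge_iff[of y V E v z] yz(1) by (simp add: spine_block_def)
    qed
  qed (simp add: spine_block_def)
next
  fix x assume x: "x \<in> spine_block V E v"
  have "(v, x) \<in> (adj_rel (non_spine_edges V E))\<^sup>*" if "x \<in> pendant_leaves V E v"
  proof -
    from that have "{v, x} \<in> non_spine_edges V E"
      by (auto simp: pendant_leaves_def non_spine_edges_def induced_edges_def internal_def)
    then show ?thesis by (simp add: adj_rel_def r_into_rtrancl)
  qed
  moreover have "x \<in> V"
    using spine_block_subset[of v V E] v x by (auto simp: internal_def)
  ultimately show "x \<in> component V (non_spine_edges V E) v"
    using x by (auto simp: component_def spine_block_def)
qed

lemma spine_block_edge_iff: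
  assumes pc: "proper_caterpillar V E"
    and v: "v \<in> internal V E" and v': "v' \<in> internal V E"
    and u: "u \<in> spine_block V E v" and u': "u' \<in> spine_block V E v'"
  shows "{u, u'} \<in> E \<longleftrightarrow> (u = v \<and> u' = v' \<and> {v, v'} \<in> E) \<or> (v = v' \<and> (u = v) \<noteq> (u' = v))"
proof (cases "u = v"; cases "u' = v'")
  assume "u = v" "u' \<noteq> v'"
  with u' have "u' \<in> pendant_leaves V E v'" by (simp add: spine_block_def)
  moreover have "{u, u'} = {u', v}" using \<open>u = v\<close> by auto
  ultimately have "{u, u'} \<in> E \<longleftrightarrow> v = v'" by (simp add: pendant_leaf_edge_iff)
  then show ?thesis using \<open>u = v\<close> \<open>u' \<noteq> v'\<close> by auto
next
  assume "u \<noteq> v" "u' = v'"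
  with u have "u \<in> pendant_leaves V E v" by (simp add: spine_block_def)
  then have "{u, u'} \<in> E \<longleftrightarrow> v = v'" using \<open>u' = v'\<close> by (auto simp: pendant_leaf_edge_iff)
  then show ?thesis using \<open>u \<noteq> v\<close> \<open>u' = v'\<close> by auto
next
  assume "u \<noteq> v" "u' \<noteq> v'"
  with u u' have leaves: "u \<in> pendant_leaves V E v" "u' \<in> pendant_leaves V E v'"
    by (simp_all add: spine_block_def)
  have "{u, u'} \<notin> E"
  proof
    assume "{u, u'} \<in> E"
    with leaves(1) have "u' = v" by (simp add: pendant_leaf_edge_iff)
    with leaves(2) show False using internal_notin_pendant_leaves[OF v] by simp
  qed
  moreover have "u' \<noteq> v" using leaves(2) internal_notin_pendant_leaves[OF v] by auto
  ultimately show ?thesis using \<open>u \<noteq> v\<close> by auto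
qed auto

lemma consecutive_pairs_rev_subset:
  "{{rev xs ! i, rev xs ! Suc i} | i. Suc i < length xs} \<subseteq> {{xs ! i, xs ! Suc i} | i. Suc i < length xs}"
proof
  fix e assume "e \<in> {{rev xs ! i, rev xs ! Suc i} | i. Suc i < length xs}"
  then obtain i where i: "Suc i < length xs" and e: "e = {rev xs ! i, rev xs ! Suc i}" by blast
  define m where "m = length xs - Suc (Suc i)"
  have "Suc m < length xs" "length xs - Suc i = Suc m" "length xs - Suc (Suc i) = m"
    using i by (auto simp: m_def)
  with i e have "e = {xs ! m, xs ! Suc m}" "Suc m < length xs"
    by (simp_all add: rev_nth insert_commute)
  then show "e \<in> {{xs ! i, xs ! Suc i} | i. Suc i < length xs}" by blast
qed

lemma spine_listing_rev:
  assumes "spine_listing V E vs"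
  shows "spine_listing V E (rev vs)"
proof -
  have "{{rev vs ! i, rev vs ! Suc i} | i. Suc i < length vs} = {{vs ! i, vs ! Suc i} | i. Suc i < length vs}"
    using consecutive_pairs_rev_subset[of vs] consecutive_pairs_rev_subset[of "rev vs"] by simp
  with assms show ?thesis unfolding spine_listing_def path_listing_def by simp
qed

lemma path_listing_edge_iff:
  assumes P: "path_listing I F vs" and i: "i < length vs" and j: "j < length vs"
  shows "{vs ! i, vs ! j} \<in> F \<longleftrightarrow> j = Suc i \<or> i = Suc j"
proof
  have d: "distinct vs" using P by (simp add: path_listing_def)
  assume "{vs ! i, vs ! j} \<in> F"
  then obtain m where m: "Suc m < length vs" "{vs ! i, vs ! j} = {vs ! m, vs ! Suc m}"
    using P by (auto simp: path_listing_def)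
  then have "(i = m \<and> j = Suc m) \<or> (i = Suc m \<and> j = m)"
    using nth_eq_iff_index_eq[OF d] i j by (auto simp: doubleton_eq_iff)
  then show "j = Suc i \<or> i = Suc j" by auto
next
  assume "j = Suc i \<or> i = Suc j"
  then show "{vs ! i, vs ! j} \<in> F"
    using P i j unfolding path_listing_def by (auto simp: insert_commute)
qed

lemma spine_listing_edge_iff:
  assumes sp: "spine_listing V E vs" and i: "i < length vs" and j: "j < length vs"
  shows "{vs ! i, vs ! j} \<in> E \<longleftrightarrow> j = Suc i \<or> i = Suc j"
proof -
  have "{vs ! i, vs ! j} \<subseteq> internal V E"
    using spine_listingD(2)[OF sp] nth_mem[OF i] nth_mem[OF j] by blast
  then have "{vs ! i, vs ! j} \<in> E \<longleftrightarrow> {vs ! i, vs ! j} \<in> induced_edges E (internal V E)"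
    by (simp add: induced_edges_def)
  also have "\<dots> \<longleftrightarrow> j = Suc i \<or> i = Suc j"
    using sp i j unfolding spine_listing_def by (rule path_listing_edge_iff)
  finally show ?thesis .
qed

lemma composition_of_rev: "composition_of V E (rev vs) = rev (composition_of V E vs)"
  by (simp add: composition_of_def rev_map)

lemma composition_of_nth:
  assumes "simple_graph V E" "spine_listing V E vs" "i < length vs"
  shows "composition_of V E vs ! i = card (spine_block V E (vs ! i))"
proof -
  have "vs ! i \<in> internal V E" using spine_listingD(2)[OF assms(2)] nth_mem[OF assms(3)] by blast
  then show ?thesis
    using assms(3) component_non_spine_edges[OF assms(1)] by (simp add: composition_of_def)
qed

lemma spine_blocks_cover_nth:
  assumes "proper_caterpillar V E" "spine_listing V E vs"
  shows "V = (\<Union>i<length vs. spine_block V E (vs ! i))"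
proof -
  have nth_image: "(!) vs ` {..<length vs} = internal V E"
  proof -
    have "(!) vs ` {..<length vs} = set vs"
      using nth_image[of "length vs" vs] by (simp add: atLeast0LessThan)
    then show ?thesis using spine_listingD(2)[OF assms(2)] by simp
  qed
  have "(\<Union>i<length vs. spine_block V E (vs ! i)) = \<Union> (spine_block V E ` ((!) vs ` {..<length vs}))"
    by (simp add: image_image)
  also have "\<dots> = V" unfolding nth_image by (rule spine_blocks_cover[OF assms(1), symmetric])
  finally show ?thesis by (rule sym)
qed

lemma disjoint_family_on_spine_blocks:
  assumes "spine_listing V E vs"
  shows "disjoint_family_on (\<lambda>i. spine_block V E (vs ! i)) {..<length vs}"
  unfolding disjoint_family_on_def
proof (intro ballI impI)
  fix i j assume "i \<in> {..<length vs}" "j \<in> {..<length vs}" "i \<noteq> j"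
  then have "vs ! i \<noteq> vs ! j" "vs ! i \<in> internal V E" "vs ! j \<in> internal V E"
    using nth_eq_iff_index_eq[OF spine_listingD(1)[OF assms]] spine_listingD(2)[OF assms] nth_mem
    by auto
  then show "spine_block V E (vs ! i) \<inter> spine_block V E (vs ! j) = {}"
    using spine_blocks_disjoint[of "vs ! i" V E "vs ! j"] by blast
qed

lemma spine_listing_block_edge_iff:
  assumes pc: "proper_caterpillar V E" and sp: "spine_listing V E vs"
    and i: "i < length vs" and j: "j < length vs"
    and u: "u \<in> spine_block V E (vs ! i)" and u': "u' \<in> spine_block V E (vs ! j)"
  shows "{u, u'} \<in> E \<longleftrightarrow>
    (u = vs ! i \<and> u' = vs ! j \<and> (j = Suc i \<or> i = Suc j)) \<or> (i = j \<and> (u = vs ! i) \<noteq> (u' = vs ! j))"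
proof -
  have "vs ! i \<in> internal V E" "vs ! j \<in> internal V E"
    using spine_listingD(2)[OF sp] nth_mem[OF i] nth_mem[OF j] by auto
  moreover have "vs ! i = vs ! j \<longleftrightarrow> i = j"
    using nth_eq_iff_index_eq[OF spine_listingD(1)[OF sp] i j] .
  ultimately show ?thesis
    using spine_block_edge_iff[OF pc _ _ u u'] spine_listing_edge_iff[OF sp i j] by auto
qed

lemma graph_iso_if_spine_block_bijections:
  assumes pc: "proper_caterpillar V E" and pc': "proper_caterpillar V' E'"
    and sp: "spine_listing V E vs" and sp': "spine_listing V' E' ws"
    and len: "length ws = length vs"
    and g: "\<And>i. i < length vs \<Longrightarrow>
      bij_betw (g i) (spine_block V E (vs ! i)) (spine_block V' E' (ws ! i)) \<and> g i (vs ! i) = ws ! i"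
  shows "graph_iso V E V' E'"
proof -
  define k where "k = length vs"
  let ?A = "\<lambda>i. spine_block V E (vs ! i)" and ?B = "\<lambda>i. spine_block V' E' (ws ! i)"
  obtain f where bij: "bij_betw f (\<Union>i<k. ?A i) (\<Union>i<k. ?B i)"
    and f: "\<And>i x. i < k \<Longrightarrow> x \<in> ?A i \<Longrightarrow> f x = g i x"
    using bij_betw_UN_disjoint_family[of "{..<k}" g ?A ?B] g len k_def
      disjoint_family_on_spine_blocks[OF sp] disjoint_family_on_spine_blocks[OF sp'] by auto
  have V: "(\<Union>i<k. ?A i) = V" and V': "(\<Union>i<k. ?B i) = V'"
    using spine_blocks_cover_nth[OF pc sp, symmetric] spine_blocks_cover_nth[OF pc' sp', symmetric]
    by (simp_all add: len k_def)
  have maps: "f x \<in> ?B i" and pointed: "f x = ws ! i \<longleftrightarrow> x = vs ! i"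
    if "i < k" "x \<in> ?A i" for i x
    using g[of i] that f[OF that] unfolding k_def bij_betw_def inj_on_def
    by (auto simp: spine_block_def)
  have edge: "{u, u'} \<in> E \<longleftrightarrow> {f u, f u'} \<in> E'"
    if "i < k" "u \<in> ?A i" "j < k" "u' \<in> ?A j" for i j u u'
    using spine_listing_block_edge_iff[OF pc sp, of i j u u']
      spine_listing_block_edge_iff[OF pc' sp', of i j "f u" "f u'"]
      that maps[OF that(1,2)] maps[OF that(3,4)] pointed[OF that(1,2)] pointed[OF that(3,4)]
    by (simp add: len k_def)
  show ?thesis
    unfolding graph_iso_def
  proof (intro exI conjI ballI)
    show "bij_betw f V V'" using bij unfolding V V' .
    show "{u, u'} \<in> E \<longleftrightarrow> {f u, f u'} \<in> E'" if "u \<in> V" "u' \<in> V" for u u'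
    proof -
      from that have "u \<in> (\<Union>i<k. ?A i)" "u' \<in> (\<Union>i<k. ?A i)" by (simp_all only: V)
      then show ?thesis using edge by blast
    qed
  qed
qed

lemma graph_iso_if_same_composition:
  assumes pc: "proper_caterpillar V E" and pc': "proper_caterpillar V' E'"
    and sp: "spine_listing V E vs" and sp': "spine_listing V' E' ws"
    and comp: "composition_of V E vs = composition_of V' E' ws"
  shows "graph_iso V E V' E'"
proof -
  have len: "length ws = length vs"
    using arg_cong[OF comp, of length] by (simp add: composition_of_def)
  have "\<exists>h. bij_betw h (spine_block V E (vs ! i)) (spine_block V' E' (ws ! i)) \<and> h (vs ! i) = ws ! i"
    if i: "i < length vs" for i
  proof -
    have "vs ! i \<in> internal V E" "ws ! i \<in> internal V' E'"
      using spine_listingD(2)[OF sp] spine_listingD(2)[OF sp'] nth_mem[OF i] nth_mem[of i ws] i len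
      by auto
    moreover have "finite (pendant_leaves V E (vs ! i))" "finite (pendant_leaves V' E' (ws ! i))"
      using proper_caterpillar_simple_graph[OF pc] proper_caterpillar_simple_graph[OF pc']
      by (auto simp: simple_graph_def pendant_leaves_def leaves_def)
    moreover have "card (spine_block V E (vs ! i)) = card (spine_block V' E' (ws ! i))"
      using comp composition_of_nth[OF proper_caterpillar_simple_graph[OF pc] sp i]
        composition_of_nth[OF proper_caterpillar_simple_graph[OF pc'] sp', of i] i len by simp
    ultimately show ?thesis
      unfolding spine_block_def
      by (metis finite_same_card_pointed_bij internal_notin_pendant_leaves)
  qed
  then obtain g where "\<And>i. i < length vs \<Longrightarrow>
      bij_betw (g i) (spine_block V E (vs ! i)) (spine_block V' E' (ws ! i)) \<and> g i (vs ! i) = ws ! i"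
    by metis
  then show ?thesis by (rule graph_iso_if_spine_block_bijections[OF pc pc' sp sp' len])
qed

theorem lemma2p2:
  fixes V :: "'a set" and E :: "'a set set" and V' :: "'b set" and E' :: "'b set set"
  assumes "proper_caterpillar V E" and "proper_caterpillar V' E'"
    and "Phi V E = Phi V' E'"
  shows "graph_iso V E V' E'"
proof -
  define vs where "vs = (SOME vs. spine_listing V E vs)"
  define ws where "ws = (SOME ws. spine_listing V' E' ws)"
  have sp: "spine_listing V E vs" unfolding vs_def
    by (rule proper_caterpillar_spineE[OF assms(1)]) (rule someI)
  have sp': "spine_listing V' E' ws" unfolding ws_def
    by (rule proper_caterpillar_spineE[OF assms(2)]) (rule someI)
  have "{composition_of V E vs, rev (composition_of V E vs)} =
        {composition_of V' E' ws, composition_of V' E' (rev ws)}"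
    using assms(3) unfolding Phi_def Let_def vs_def ws_def composition_of_rev .
  then consider "composition_of V E vs = composition_of V' E' ws"
    | "composition_of V E vs = composition_of V' E' (rev ws)"
    by (auto simp: doubleton_eq_iff)
  then show ?thesis
    using graph_iso_if_same_composition[OF assms(1,2) sp] sp' spine_listing_rev[OF sp'] by cases
qed

end
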